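(* For every natural number $n$, $$\Phi^*_n(x)=\prod_{\substack{d\mid n\\ \kappa(d)=\kappa(n)}}\Phi_d(x).$$ Equivalently, $\Phi^*_n(x)=\prod_{d\mid n/\kappa(n)}\Phi_{\kappa(n)}(x^d)$.
   Context: $\Phi_d(x)=\prod_{1\le j\le d,\ \gcd(j,d)=1}(x-\zeta_d^j)$ is the $d$-th cyclotomic polynomial, $\zeta_d=e^{2\pi i/d}$. A divisor $d$ of $n$ is unitary, $d\mid\mid n$, if $\gcd(d,n/d)=1$; $(j,n)_*=\max\{d: d\mid j,\ d\mid\mid n\}$; the unitary cyclotomic polynomial is $\Phi^*_n(x)=\prod_{1\le j\le n,\ (j,n)_*=1}(x-\zeta_n^j)$. $\kappa(n)=\prod_{p\mid n}p$ denotes the squarefree kernel of $n$ (with $\kappa(1)=1$). *)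

theory Defs
  imports "HOL-Complex_Analysis.Complex_Analysis" "HOL-Computational_Algebra.Computational_Algebra"
begin

definition zeta :: "nat \<Rightarrow> complex" where
  "zeta d = exp (2 * of_real pi * \<i> / of_nat d)"

definition cyclotomic :: "nat \<Rightarrow> complex poly" where
  "cyclotomic d = (\<Prod>j\<in>{j\<in>{1..d}. gcd j d = 1}. [:- (zeta d ^ j), 1:])"

definition unitary_dvd :: "nat \<Rightarrow> nat \<Rightarrow> bool" where
  "unitary_dvd d n \<longleftrightarrow> d dvd n \<and> gcd d (n div d) = 1"

definition ugcd :: "nat \<Rightarrow> nat \<Rightarrow> nat" where
  "ugcd j n = Max {d. d dvd j \<and> unitary_dvd d n}"

definition unitary_cyclotomic :: "nat \<Rightarrow> complex poly" where
  "unitary_cyclotomic n = (\<Prod>j\<in>{j\<in>{1..n}. ugcd j n = 1}. [:- (zeta n ^ j), 1:])"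

definition sqf_kernel :: "nat \<Rightarrow> nat" where
  "sqf_kernel n = \<Prod>(prime_factors n)"

end

(*
  A residue j is counted in the unitary product iff no unitary divisor p^(v_p n) > 1 of n
  divides j, i.e. iff n / gcd(j, n) is divisible by every prime factor of n.  Grouping the
  roots zeta_n^j by their order d = n / gcd(j, n) thus collects exactly the primitive d-th
  roots of unity for the divisors d of n with kappa(d) = kappa(n).  Every such d is
  kappa(n) * e with e dividing n / kappa(n), and Phi_m(x^e) = Phi_(m e) whenever the primes
  of e divide m: both sides are monic of degree phi(m e) = phi(m) e and vanish at the
  phi(m e) primitive (m e)-th roots of unity.
*)

theory Submission
  imports Defs "HOL-Number_Theory.Totient"
begin

lemma div_dvd_dividend: "b dvd a \<Longrightarrow> a div b dvd (a :: nat)"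
  by (metis dvd_div_mult_self dvd_triv_left)

lemma prime_factors_sqf_kernel [simp]: "prime_factors (sqf_kernel n) = prime_factors n"
proof -
  have "prime_factors (\<Prod>p\<in>prime_factors n. p) = (\<Union>p\<in>prime_factors n. prime_factors p)"
    using prime_factors_prod[of "prime_factors n" "\<lambda>p. p"] by (auto simp: o_def)
  also have "\<dots> = prime_factors n"
    by (auto simp: prime_factorization_prime in_prime_factors_imp_prime)
  finally show ?thesis
    by (simp add: sqf_kernel_def)
qed

lemma sqf_kernel_pos: "sqf_kernel n > 0"
  unfolding sqf_kernel_def by (auto intro!: prod_pos prime_gt_0_nat dest: in_prime_factors_imp_prime)

lemma sqf_kernel_dvd: "sqf_kernel n dvd n"
proof (cases "n = 0")
  case False
  have "(\<Prod>p\<in>prime_factors n. p) dvd (\<Prod>p\<in>prime_factors n. p ^ multiplicity p n)"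
    by (rule prod_dvd_prod) (auto intro!: dvd_power simp: prime_factors_multiplicity)
  also have "\<dots> = n"
    using False by (simp add: prime_factorization_nat[symmetric])
  finally show ?thesis
    by (simp add: sqf_kernel_def)
qed simp

lemma sqf_kernel_eq_iff: "sqf_kernel a = sqf_kernel b \<longleftrightarrow> prime_factors a = prime_factors b"
  by (metis prime_factors_sqf_kernel sqf_kernel_def)

lemma dvd_div_sqf_kernelD:
  assumes "n > 0" "e dvd n div sqf_kernel n"
  shows "e > 0" "prime_factors e \<subseteq> prime_factors n"
proof -
  have "e dvd n"
    using assms(2) div_dvd_dividend[OF sqf_kernel_dvd] by (rule dvd_trans)
  with assms(1) show "e > 0"
    by (rule dvd_pos_nat)
  from \<open>e dvd n\<close> assms(1) show "prime_factors e \<subseteq> prime_factors n"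
    by (intro dvd_prime_factors) auto
qed

lemma unitary_dvd_prime_power_multiplicity:
  assumes "prime (p :: nat)" "n > 0"
  shows "unitary_dvd (p ^ multiplicity p n) n"
proof -
  have "\<not> p dvd n div p ^ multiplicity p n"
    by (rule multiplicity_decompose) (use assms in auto)
  then have "coprime (p ^ multiplicity p n) (n div p ^ multiplicity p n)"
    using assms(1) by (simp add: prime_imp_coprime)
  then show ?thesis
    by (simp add: unitary_dvd_def multiplicity_dvd)
qed

lemma ugcd_eq_1_iff:
  assumes "n > 0"
  shows "ugcd j n = 1 \<longleftrightarrow> (\<forall>d. d dvd j \<longrightarrow> unitary_dvd d n \<longrightarrow> d = 1)"
proof -
  define A where "A = {d. d dvd j \<and> unitary_dvd d n}"
  have A_bounds: "A \<subseteq> {1..n}"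
    using assms by (auto simp: A_def unitary_dvd_def intro: dvd_imp_le dvd_pos_nat)
  then have "finite A"
    by (rule finite_subset) simp
  moreover have "1 \<in> A"
    by (simp add: A_def unitary_dvd_def)
  ultimately have "Max A \<ge> 1"
    by (rule Max_ge)
  then have "Max A = 1 \<longleftrightarrow> Max A \<le> 1"
    by linarith
  also have "\<dots> \<longleftrightarrow> (\<forall>d\<in>A. d \<le> 1)"
    using \<open>finite A\<close> \<open>1 \<in> A\<close> by (subst Max_le_iff) auto
  also have "\<dots> \<longleftrightarrow> (\<forall>d\<in>A. d = 1)"
    using A_bounds by fastforce
  finally show ?thesis
    by (auto simp: ugcd_def A_def)
qed

lemma prime_dvd_div_gcd_if_ugcd_eq_1:
  assumes "n > 0" "ugcd j n = 1" "prime p" "p dvd n"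
  shows "p dvd n div gcd j n"
proof -
  let ?q = "p ^ multiplicity p n"
  have "multiplicity p n > 0"
    using assms by (simp add: prime_multiplicity_gt_zero_iff)
  then have "?q \<noteq> 1"
    using prime_gt_1_nat[OF assms(3)] by simp
  moreover have "unitary_dvd ?q n"
    using assms(3,1) by (rule unitary_dvd_prime_power_multiplicity)
  ultimately have "\<not> ?q dvd j"
    using assms(2) ugcd_eq_1_iff[OF assms(1)] by blast
  then have "\<not> ?q dvd gcd j n"
    by (meson dvd_trans gcd_dvd1)
  moreover have "?q dvd gcd j n * (n div gcd j n)"
    by (simp add: multiplicity_dvd)
  ultimately have "\<not> coprime ?q (n div gcd j n)"
    by (metis coprime_dvd_mult_left_iff)
  then show ?thesis
    using assms(3) by (metis coprime_power_left_iff prime_imp_coprime)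
qed

lemma ugcd_eq_1_if_prime_dvd_div_gcd:
  assumes "n > 0" "\<And>p. prime p \<Longrightarrow> p dvd n \<Longrightarrow> p dvd n div gcd j n"
  shows "ugcd j n = 1"
  unfolding ugcd_eq_1_iff[OF assms(1)]
proof (intro allI impI)
  fix d assume d: "d dvd j" "unitary_dvd d n"
  show "d = 1"
  proof (rule ccontr)
    assume "d \<noteq> 1"
    then obtain p where p: "prime p" "p dvd d"
      using prime_factor_nat by blast
    have "d dvd n" "coprime d (n div d)" "d > 0"
      using d(2) assms(1) by (auto simp: unitary_dvd_def coprime_iff_gcd_eq_1 intro: dvd_pos_nat)
    have "p * d dvd (n div gcd j n) * gcd j n"
      using assms(2) p \<open>d dvd n\<close> d(1) by (intro mult_dvd_mono) (auto intro: dvd_trans)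
    then have "p dvd n div d"
      using \<open>d > 0\<close> \<open>d dvd n\<close> by (simp add: dvd_div_iff_mult)
    with p \<open>coprime d (n div d)\<close> show False
      by (meson coprime_common_divisor not_prime_unit)
  qed
qed

lemma ugcd_eq_1_iff_sqf_kernel:
  assumes "n > 0"
  shows "ugcd j n = 1 \<longleftrightarrow> sqf_kernel (n div gcd j n) = sqf_kernel n"
proof -
  have "n div gcd j n dvd n" "n div gcd j n > 0"
    using assms by (auto simp: div_dvd_dividend div_greater_zero_iff intro: gcd_le2_nat)
  then have "prime_factors (n div gcd j n) = prime_factors n
      \<longleftrightarrow> (\<forall>p. prime p \<longrightarrow> p dvd n \<longrightarrow> p dvd n div gcd j n)"
    using assms by (auto simp: prime_factors_dvd intro: dvd_trans)
  then show ?thesis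
    using prime_dvd_div_gcd_if_ugcd_eq_1[OF assms] ugcd_eq_1_if_prime_dvd_div_gcd[OF assms]
    by (auto simp: sqf_kernel_eq_iff)
qed

lemma zeta_power: "zeta m ^ k = exp (2 * of_real pi * \<i> * of_nat k / of_nat m)"
  unfolding zeta_def exp_of_nat_mult[symmetric] by (simp add: mult_ac)

lemma zeta_power_eq_iff: "m > 0 \<Longrightarrow> zeta m ^ j = zeta m ^ k \<longleftrightarrow> j mod m = k mod m"
  using complex_root_unity_eq[of m j k] by (simp add: zeta_power)

lemma zeta_mult_power_mult: "e > 0 \<Longrightarrow> zeta (m * e) ^ (k * e) = zeta m ^ k"
  by (simp add: zeta_power mult_ac)

lemma cyclotomic_conv_totatives: "cyclotomic m = (\<Prod>k\<in>totatives m. [:- (zeta m ^ k), 1:])"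
proof -
  have "{j\<in>{1..m}. gcd j m = 1} = totatives m"
    by (auto simp: in_totatives_iff coprime_iff_gcd_eq_1)
  then show ?thesis
    by (simp add: cyclotomic_def)
qed

lemma degree_cyclotomic: "degree (cyclotomic m) = totient m"
  by (simp add: cyclotomic_conv_totatives degree_prod_sum_eq totient_def)

lemma lead_coeff_cyclotomic: "lead_coeff (cyclotomic m) = 1"
  by (simp add: cyclotomic_conv_totatives lead_coeff_prod)

lemma inj_on_zeta_power: "inj_on (\<lambda>k. zeta m ^ k) (totatives m)"
proof (cases "m > 1")
  case True
  then show ?thesis
    by (auto intro!: inj_onI simp: zeta_power_eq_iff totatives_less)
next
  case False
  then have "m = 0 \<or> m = 1"
    by linarith
  then show ?thesis
    by auto
qed

lemma poly_cyclotomic_zeta_power: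
  assumes "m > 0" "coprime k m"
  shows "poly (cyclotomic m) (zeta m ^ k) = 0"
proof -
  obtain k' where k': "k' \<in> totatives m" "k' mod m = k mod m"
  proof (cases "m = 1")
    case False
    with assms have "k mod m \<in> totatives m"
      by (auto simp: in_totatives_iff mod_greater_zero_iff_not_dvd
          dest: coprime_common_divisor_nat[OF assms(2) _ dvd_refl])
    then show ?thesis
      using that[of "k mod m"] by simp
  qed (use that[of 1] in simp)
  then have "zeta m ^ k = zeta m ^ k'"
    using assms(1) by (simp add: zeta_power_eq_iff)
  with k'(1) show ?thesis
    by (auto simp: cyclotomic_conv_totatives poly_prod intro: prod_zero)
qed

lemma totient_mult_of_prime_factors_subset:
  assumes "prime_factors e \<subseteq> prime_factors m"
  shows "totient (m * e) = totient m * e"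
proof (cases "m = 0 \<or> e = 0")
  case False
  then have "prime_factors (m * e) = prime_factors m"
    using assms by (auto simp: prime_factors_product)
  then have "real (totient (m * e)) = real e * (real m * (\<Prod>p\<in>prime_factors m. 1 - 1 / real p))"
    by (simp add: totient_formula2[of "m * e"])
  also have "\<dots> = real (totient m * e)"
    by (simp add: totient_formula2[of m])
  finally show ?thesis
    by (simp only: of_nat_eq_iff)
qed auto

lemma cyclotomic_pcompose_monom:
  assumes "m > 0" "e > 0" "prime_factors e \<subseteq> prime_factors m"
  shows "pcompose (cyclotomic m) (monom 1 e) = cyclotomic (m * e)"
proof (rule poly_eqI_degree_lead_coeff)
  let ?Z = "(\<lambda>k. zeta (m * e) ^ k) ` totatives (m * e)"
  have "degree (pcompose (cyclotomic m) (monom 1 e)) = totient (m * e)"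
    using assms by (simp add: degree_pcompose degree_cyclotomic degree_monom_eq
        totient_mult_of_prime_factors_subset)
  moreover have "lead_coeff (pcompose (cyclotomic m) (monom 1 e)) = 1"
    using assms(2) by (simp add: lead_coeff_comp degree_monom_eq lead_coeff_cyclotomic)
  ultimately show "coeff (pcompose (cyclotomic m) (monom 1 e)) (totient (m * e))
      = coeff (cyclotomic (m * e)) (totient (m * e))"
    "degree (pcompose (cyclotomic m) (monom 1 e)) \<le> totient (m * e)"
    by (simp_all add: lead_coeff_cyclotomic flip: degree_cyclotomic)
  show "degree (cyclotomic (m * e)) \<le> totient (m * e)"
    by (simp add: degree_cyclotomic)
  show "card ?Z \<ge> totient (m * e)"
    by (simp add: card_image inj_on_zeta_power totient_def)
  fix z assume "z \<in> ?Z"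
  then obtain k where k: "k \<in> totatives (m * e)" "z = zeta (m * e) ^ k"
    by blast
  then have "coprime k m" "coprime k (m * e)"
    by (auto simp: in_totatives_iff)
  have "z ^ e = zeta (m * e) ^ (k * e)"
    by (simp add: k(2) power_mult)
  also have "\<dots> = zeta m ^ k"
    using assms(2) by (rule zeta_mult_power_mult)
  finally have "z ^ e = zeta m ^ k" .
  then show "poly (pcompose (cyclotomic m) (monom 1 e)) z = poly (cyclotomic (m * e)) z"
    using assms \<open>coprime k m\<close> \<open>coprime k (m * e)\<close>
    by (simp add: poly_pcompose poly_monom k(2) poly_cyclotomic_zeta_power)
qed

lemma cyclotomic_conv_prod_gcd_eq:
  assumes "d dvd n" "n > 0"
  shows "(\<Prod>j | j \<in> {0<..n} \<and> gcd j n = n div d. [:- (zeta n ^ j), 1:]) = cyclotomic d"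
proof -
  have n_eq: "d * (n div d) = n" and "n div d > 0" and "n div (n div d) = d" and "n div d dvd n"
    using assms by (auto elim!: dvdE)
  then have "bij_betw (\<lambda>k. k * (n div d)) (totatives d) {j\<in>{0<..n}. gcd j n = n div d}"
    using bij_betw_totatives_gcd_eq[of "n div d" n] assms(2) by simp
  then have "(\<Prod>j | j \<in> {0<..n} \<and> gcd j n = n div d. [:- (zeta n ^ j), 1:])
      = (\<Prod>k\<in>totatives d. [:- (zeta n ^ (k * (n div d))), 1:])"
    by (rule prod.reindex_bij_betw[symmetric])
  also have "zeta n ^ (k * (n div d)) = zeta d ^ k" for k
    using zeta_mult_power_mult[OF \<open>n div d > 0\<close>, of d k] by (simp only: n_eq)
  then have "(\<Prod>k\<in>totatives d. [:- (zeta n ^ (k * (n div d))), 1:]) = cyclotomic d"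
    by (simp add: cyclotomic_conv_totatives)
  finally show ?thesis .
qed

text \<open>The root \<open>zeta n ^ j\<close> has order \<open>n div gcd j n\<close>; the predicate \<open>P\<close> selects orders.\<close>

lemma prod_zeta_powers_grouped_by_order:
  assumes "n > 0"
  shows "(\<Prod>j | j \<in> {1..n} \<and> P (n div gcd j n). [:- (zeta n ^ j), 1:])
       = (\<Prod>d | d dvd n \<and> P d. cyclotomic d)"
proof -
  let ?S = "{j\<in>{1..n}. P (n div gcd j n)}" and ?D = "{d. d dvd n \<and> P d}"
  have "(\<Prod>j\<in>?S. [:- (zeta n ^ j), 1:])
      = (\<Prod>d\<in>?D. \<Prod>j | j \<in> ?S \<and> n div gcd j n = d. [:- (zeta n ^ j), 1:])"
    using assms by (intro prod.group[symmetric]) (auto simp: div_dvd_dividend)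
  also have "\<dots> = (\<Prod>d\<in>?D. cyclotomic d)"
  proof (rule prod.cong[OF refl])
    fix d assume d: "d \<in> ?D"
    then have "d \<noteq> 0" and d_eq: "n div (n div d) = d"
      using assms by (auto elim!: dvdE)
    then have "n div gcd j n = d \<longleftrightarrow> gcd j n = n div d" for j
      using assms d dvd_div_eq_mult[of "gcd j n" n d] dvd_div_eq_mult[of d n "gcd j n"]
      by (auto simp: mult.commute)
    then have "{j. j \<in> ?S \<and> n div gcd j n = d} = {j. j \<in> {0<..n} \<and> gcd j n = n div d}"
      using d d_eq by auto
    then show "(\<Prod>j | j \<in> ?S \<and> n div gcd j n = d. [:- (zeta n ^ j), 1:]) = cyclotomic d"
      using d assms cyclotomic_conv_prod_gcd_eq[of d n] by simp
  qed
  finally show ?thesis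
    by simp
qed

lemma unitary_cyclotomic_conv_prod_cyclotomic:
  assumes "n > 0"
  shows "unitary_cyclotomic n = (\<Prod>d | d dvd n \<and> sqf_kernel d = sqf_kernel n. cyclotomic d)"
proof -
  have "{j\<in>{1..n}. ugcd j n = 1} = {j\<in>{1..n}. sqf_kernel (n div gcd j n) = sqf_kernel n}"
    using ugcd_eq_1_iff_sqf_kernel[OF assms] by blast
  then show ?thesis
    using prod_zeta_powers_grouped_by_order[OF assms, of "\<lambda>d. sqf_kernel d = sqf_kernel n"]
    by (simp add: unitary_cyclotomic_def)
qed

lemma bij_betw_sqf_kernel_mult:
  assumes "n > 0"
  shows "bij_betw ((*) (sqf_kernel n)) {e. e dvd n div sqf_kernel n}
           {d. d dvd n \<and> sqf_kernel d = sqf_kernel n}"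
proof (rule bij_betw_byWitness[where f' = "\<lambda>d. d div sqf_kernel n"])
  show "\<forall>e\<in>{e. e dvd n div sqf_kernel n}. sqf_kernel n * e div sqf_kernel n = e"
    by (simp add: sqf_kernel_pos)
  show "\<forall>d\<in>{d. d dvd n \<and> sqf_kernel d = sqf_kernel n}. sqf_kernel n * (d div sqf_kernel n) = d"
    by (metis (mono_tags) dvd_mult_div_cancel mem_Collect_eq sqf_kernel_dvd)
  show "(\<lambda>d. d div sqf_kernel n) ` {d. d dvd n \<and> sqf_kernel d = sqf_kernel n}
      \<subseteq> {e. e dvd n div sqf_kernel n}"
  proof clarify
    fix d assume "d dvd n" "sqf_kernel d = sqf_kernel n"
    then have "sqf_kernel n dvd d"
      using sqf_kernel_dvd[of d] by simp
    with \<open>d dvd n\<close> show "d div sqf_kernel n dvd n div sqf_kernel n"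
      by (simp add: div_dvd_div sqf_kernel_dvd)
  qed
  show "(*) (sqf_kernel n) ` {e. e dvd n div sqf_kernel n}
      \<subseteq> {d. d dvd n \<and> sqf_kernel d = sqf_kernel n}"
  proof clarify
    fix e assume e: "e dvd n div sqf_kernel n"
    from dvd_div_sqf_kernelD[OF assms e] have "prime_factors (sqf_kernel n * e) = prime_factors n"
      by (auto simp: prime_factors_product sqf_kernel_pos)
    moreover have "sqf_kernel n * e dvd n"
      using e by (simp add: dvd_div_iff_mult sqf_kernel_pos sqf_kernel_dvd mult.commute)
    ultimately show "sqf_kernel n * e dvd n \<and> sqf_kernel (sqf_kernel n * e) = sqf_kernel n"
      by (simp add: sqf_kernel_eq_iff)
  qed
qed

theorem theorem3p1:
  fixes n :: nat
  assumes "n \<ge> 1"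
  shows "unitary_cyclotomic n = (\<Prod>d\<in>{d. d dvd n \<and> sqf_kernel d = sqf_kernel n}. cyclotomic d)
       \<and> unitary_cyclotomic n =
           (\<Prod>d\<in>{d. d dvd (n div sqf_kernel n)}. pcompose (cyclotomic (sqf_kernel n)) (monom 1 d))"
proof -
  have "n > 0"
    using assms by simp
  let ?k = "sqf_kernel n"
  have "(\<Prod>e\<in>{e. e dvd n div ?k}. pcompose (cyclotomic ?k) (monom 1 e))
      = (\<Prod>e\<in>{e. e dvd n div ?k}. cyclotomic (?k * e))"
    using dvd_div_sqf_kernelD[OF \<open>n > 0\<close>]
    by (intro prod.cong refl cyclotomic_pcompose_monom) (auto simp: sqf_kernel_pos)
  also have "\<dots> = (\<Prod>d\<in>{d. d dvd n \<and> sqf_kernel d = ?k}. cyclotomic d)"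
    using bij_betw_sqf_kernel_mult[OF \<open>n > 0\<close>] by (rule prod.reindex_bij_betw)
  finally show ?thesis
    using unitary_cyclotomic_conv_prod_cyclotomic[OF \<open>n > 0\<close>] by simp
qed

end
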